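(* Let $\mathcal F$ be a family of nonempty subsets of $[r]$ whose building closure $\widehat{\mathcal F}$ contains $[r]$. Then the normal fan of $\Delta_{\widehat{\mathcal F}}$ is a simplicial fan refining the normal fan of $\Delta_{\mathcal F}$ (every cone of the former is contained in a cone of the latter, and both fans have support $\mathbb R^r$); i.e. it is a triangulation of the normal fan of $\Delta_{\mathcal F}$.
   Context: For $F\subseteq[r]$ nonempty, $\Delta_F=\operatorname{conv}\{e_i:i\in F\}\subseteq\mathbb R^r$, and for a family $\mathcal F$, $\Delta_{\mathcal F}=\sum_{F\in\mathcal F}\Delta_F$ (Minkowski sum). The building closure $\widehat{\mathcal F}$ is the smallest family of subsets of $[r]$ containing $\mathcal F$ and all singletons such that $F\cup F'\in\widehat{\mathcal F}$ whenever $F,F'\in\widehat{\mathcal F}$ and $F\cap F'\ne\emptyset$. Normal fans are considered modulo the common lineality line $\mathbb R(1,\dots,1)$. *)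

theory Defs
  imports "HOL-Analysis.Analysis"
begin

text \<open>Ground set [r] is the finite index type 'n; R^r is real^'n.\<close>

definition simplexF :: "'n::finite set \<Rightarrow> (real^'n) set" where
  "simplexF F = convex hull ((\<lambda>i. axis i 1) ` F)"

definition minkowski_family :: "'n::finite set set \<Rightarrow> (real^'n) set" where
  "minkowski_family \<F> =
     {\<Sum>F\<in>\<F>. x F | x. \<forall>F\<in>\<F>. x F \<in> simplexF F}"

inductive_set building_closure :: "'n set set \<Rightarrow> 'n set set" for \<F> where
  base: "F \<in> \<F> \<Longrightarrow> F \<in> building_closure \<F>"
| singleton: "{i} \<in> building_closure \<F>"
| union: "F \<in> building_closure \<F> \<Longrightarrow> G \<in> building_closure \<F> \<Longrightarrow>
           F \<inter> G \<noteq> {} \<Longrightarrow> F \<union> G \<in> building_closure \<F>"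

definition normal_cone :: "(real^'n) set \<Rightarrow> (real^'n) set \<Rightarrow> (real^'n) set" where
  "normal_cone P S = {c. \<forall>x\<in>S. \<forall>y\<in>P. c \<bullet> y \<le> c \<bullet> x}"

definition normal_fan :: "(real^'n) set \<Rightarrow> (real^'n) set set" where
  "normal_fan P = {normal_cone P S | S. S face_of P \<and> S \<noteq> {}}"

definition ones :: "real^'n" where
  "ones = (\<chi> i. 1)"

text \<open>A cone is simplicial modulo the lineality line R*ones: it is generated
  (nonnegatively) by vectors V which, together with ones, are linearly independent,
  plus the line R*ones.\<close>
definition simplicial_mod_ones :: "(real^'n::finite) set \<Rightarrow> bool" where
  "simplicial_mod_ones C \<longleftrightarrow>
     (\<exists>V. finite V \<and> ones \<notin> V \<and> independent (insert ones V) \<and>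
          C = {(\<Sum>v\<in>V. a v *\<^sub>R v) + t *\<^sub>R ones | a t. \<forall>v\<in>V. a v \<ge> 0})"

definition is_fan :: "(real^'n::finite) set set \<Rightarrow> bool" where
  "is_fan \<Sigma> \<longleftrightarrow>
     (\<forall>C\<in>\<Sigma>. convex C \<and> cone C \<and> closed C) \<and>
     (\<forall>C\<in>\<Sigma>. \<forall>D. D face_of C \<and> D \<noteq> {} \<longrightarrow> D \<in> \<Sigma>) \<and>
     (\<forall>C\<in>\<Sigma>. \<forall>D\<in>\<Sigma>. (C \<inter> D) face_of C \<and> (C \<inter> D) face_of D)"

definition simplicial_fan :: "(real^'n::finite) set set \<Rightarrow> bool" where
  "simplicial_fan \<Sigma> \<longleftrightarrow> is_fan \<Sigma> \<and> (\<forall>C\<in>\<Sigma>. simplicial_mod_ones C)"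

definition fan_support :: "(real^'n) set set \<Rightarrow> (real^'n) set" where
  "fan_support \<Sigma> = \<Union>\<Sigma>"

definition refines :: "(real^'n) set set \<Rightarrow> (real^'n) set set \<Rightarrow> bool" where
  "refines \<Sigma> \<Sigma>' \<longleftrightarrow> (\<forall>C\<in>\<Sigma>. \<exists>D\<in>\<Sigma>'. C \<subseteq> D)"

end

theory Submission
  imports Defs
begin

text \<open>The support function of \<open>\<Delta>\<^sub>B\<close> at \<open>c\<close> is the sum over \<open>S \<in> B\<close> of the maxima of \<open>c\<close> on \<open>S\<close>,
  and the normal cone of the face on which \<open>c0\<close> is maximal consists of the \<open>c\<close> whose argmax
  on every \<open>S \<in> B\<close> contains that of \<open>c0\<close>. These argmax cones are cut out by inequalities
  \<open>c\<^sub>j \<le> c\<^sub>i\<close>, two of them meet in a common face, and every face of one is another, so they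
  form a complete fan; enlarging \<open>B\<close> only shrinks them, which gives the refinement.
  If \<open>B\<close> is a building set containing \<open>[r]\<close>, the maximal members of \<open>B\<close> contained in sublevel
  sets of \<open>c0\<close> form a laminar family in which every member has a point lying in no smaller
  member. Hence their indicator vectors are linearly independent, and every \<open>c\<close> in the cone of
  \<open>c0\<close> is a nonnegative combination of the negated indicators plus a multiple of \<open>ones\<close>: at
  each coordinate the coefficients telescope along the chain of members containing it.\<close>

section \<open>Simplices and maxima of linear functionals\<close>

definition max_on :: "real^'n::finite \<Rightarrow> 'n set \<Rightarrow> real" where
  "max_on c S = Max ((\<lambda>i. c$i) ` S)"

definition argmax_on :: "real^'n::finite \<Rightarrow> 'n set \<Rightarrow> 'n set" where
  "argmax_on c S = {i\<in>S. \<forall>j\<in>S. c$j \<le> c$i}"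

lemma max_on_ge: "i \<in> S \<Longrightarrow> c$i \<le> max_on c S"
  unfolding max_on_def by (rule Max_ge) auto

lemma max_on_mono: "S \<noteq> {} \<Longrightarrow> S \<subseteq> S' \<Longrightarrow> max_on c S \<le> max_on c S'"
  unfolding max_on_def by (intro Max_mono) auto

lemma argmax_on_eq: "S \<noteq> {} \<Longrightarrow> argmax_on c S = {i\<in>S. c$i = max_on c S}"
  unfolding argmax_on_def max_on_def by (auto simp: Max_eq_iff intro!: Max_eqI[symmetric])

lemma argmax_on_subset: "argmax_on c S \<subseteq> S"
  unfolding argmax_on_def by auto

lemma argmax_on_nonempty: "S \<noteq> {} \<Longrightarrow> argmax_on c S \<noteq> {}"
  unfolding argmax_on_eq max_on_def using Max_in[of "(\<lambda>i. c$i) ` S"] by fastforce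

lemma mem_simplexF_iff:
  "x \<in> simplexF S \<longleftrightarrow> (\<forall>i. 0 \<le> x$i) \<and> (\<forall>i. i \<notin> S \<longrightarrow> x$i = 0) \<and> (\<Sum>i\<in>UNIV. x$i) = 1"
proof -
  let ?\<Delta> = "{x. (\<forall>i. 0 \<le> x$i) \<and> (\<forall>i. i \<notin> S \<longrightarrow> x$i = (0::real)) \<and> (\<Sum>i\<in>UNIV. x$i) = 1}"
  have "convex ?\<Delta>"
    by (auto simp: convex_def sum.distrib sum_distrib_left[symmetric])
  moreover have "(\<lambda>i. axis i 1) ` S \<subseteq> ?\<Delta>"
    by (auto simp: axis_def)
  ultimately have "simplexF S \<subseteq> ?\<Delta>"
    unfolding simplexF_def by (rule hull_minimal[rotated])
  moreover have "x \<in> simplexF S" if x: "x \<in> ?\<Delta>" for x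
  proof -
    have "x = (\<Sum>i\<in>S. x$i *\<^sub>R axis i 1)"
      using x by (auto simp: vec_eq_iff axis_def if_distrib cong: if_cong)
    also have "\<dots> \<in> simplexF S"
      unfolding simplexF_def
    proof (rule convex_sum)
      show "(\<Sum>i\<in>S. x$i) = 1"
        using x sum.mono_neutral_left[of UNIV S "\<lambda>i. x$i"] by auto
    qed (use x in \<open>auto intro: hull_inc\<close>)
    finally show ?thesis .
  qed
  ultimately show ?thesis by blast
qed

lemma simplexF_index_nonempty: "x \<in> simplexF S \<Longrightarrow> S \<noteq> {}"
  by (auto simp: mem_simplexF_iff)

lemma inner_simplexF_gap:
  assumes "x \<in> simplexF S"
  shows "c \<bullet> x = max_on c S - (\<Sum>i\<in>S. x$i * (max_on c S - c$i))"
proof -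
  have vanish: "\<forall>i. i \<notin> S \<longrightarrow> x$i = 0" and total: "(\<Sum>i\<in>S. x$i) = 1"
    using assms sum.mono_neutral_left[of UNIV S "\<lambda>i. x$i"] by (auto simp: mem_simplexF_iff)
  have "c \<bullet> x = (\<Sum>i\<in>S. x$i * c$i)"
    unfolding inner_vec_def using vanish by (subst sum.mono_neutral_right[of UNIV S]) (auto simp: mult.commute)
  also have "\<dots> = (\<Sum>i\<in>S. x$i) * max_on c S - (\<Sum>i\<in>S. x$i * (max_on c S - c$i))"
    by (simp add: sum_distrib_right[symmetric] sum_subtractf right_diff_distrib)
  finally show ?thesis using total by simp
qed

lemma simplexF_inner_le: "x \<in> simplexF S \<Longrightarrow> c \<bullet> x \<le> max_on c S"
  by (auto simp: inner_simplexF_gap mem_simplexF_iff max_on_ge intro!: sum_nonneg)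

lemma simplexF_inner_eq_max_on_iff:
  assumes "x \<in> simplexF S"
  shows "c \<bullet> x = max_on c S \<longleftrightarrow> {i. x$i \<noteq> 0} \<subseteq> argmax_on c S"
proof -
  have nonneg: "\<And>i. i \<in> S \<Longrightarrow> 0 \<le> x$i * (max_on c S - c$i)"
    using assms by (auto simp: mem_simplexF_iff max_on_ge)
  have "c \<bullet> x = max_on c S \<longleftrightarrow> (\<forall>i\<in>S. x$i * (max_on c S - c$i) = 0)"
    using sum_nonneg_eq_0_iff[OF finite nonneg] by (simp add: inner_simplexF_gap[OF assms])
  also have "\<dots> \<longleftrightarrow> {i. x$i \<noteq> 0} \<subseteq> argmax_on c S"
    using assms simplexF_index_nonempty[OF assms] by (auto simp: mem_simplexF_iff argmax_on_eq)
  finally show ?thesis .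
qed

definition barycenter :: "'n::finite set \<Rightarrow> real^'n" where
  "barycenter M = (\<chi> i. if i \<in> M then 1 / real (card M) else 0)"

lemma barycenter_in_simplexF:
  assumes "M \<noteq> {}" "M \<subseteq> S"
  shows "barycenter M \<in> simplexF S"
proof -
  have "(\<Sum>i\<in>UNIV. barycenter M $ i) = (\<Sum>i\<in>M. 1 / real (card M))"
    unfolding barycenter_def by (simp add: sum.If_cases Int_absorb1)
  also have "\<dots> = 1"
    using assms(1) by simp
  finally show ?thesis
    using assms(2) by (auto simp: mem_simplexF_iff barycenter_def)
qed

lemma inner_barycenter_eq_max_on_iff:
  assumes "M \<noteq> {}" "M \<subseteq> S"
  shows "c \<bullet> barycenter M = max_on c S \<longleftrightarrow> M \<subseteq> argmax_on c S"
proof -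
  have "{i. barycenter M $ i \<noteq> 0} = M"
    using assms(1) by (auto simp: barycenter_def)
  then show ?thesis
    using simplexF_inner_eq_max_on_iff[OF barycenter_in_simplexF[OF assms]] by simp
qed

section \<open>The normal fan of a Minkowski sum of simplices\<close>

definition support_fun :: "'n::finite set set \<Rightarrow> real^'n \<Rightarrow> real" where
  "support_fun B c = (\<Sum>S\<in>B. max_on c S)"

definition argmax_cone :: "'n::finite set set \<Rightarrow> real^'n \<Rightarrow> (real^'n) set" where
  "argmax_cone B c0 = {c. \<forall>S\<in>B. argmax_on c0 S \<subseteq> argmax_on c S}"

definition central_point :: "'n::finite set set \<Rightarrow> real^'n \<Rightarrow> real^'n" where
  "central_point B c0 = (\<Sum>S\<in>B. barycenter (argmax_on c0 S))"

definition max_face :: "'n::finite set set \<Rightarrow> real^'n \<Rightarrow> (real^'n) set" where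
  "max_face B c = minkowski_family B \<inter> {x. c \<bullet> x = support_fun B c}"

lemma argmax_cone_self: "c \<in> argmax_cone B c"
  by (simp add: argmax_cone_def)

lemma argmax_cone_trans: "c1 \<in> argmax_cone B c0 \<Longrightarrow> argmax_cone B c1 \<subseteq> argmax_cone B c0"
  by (auto simp: argmax_cone_def)

lemma argmax_cone_antimono: "B \<subseteq> B' \<Longrightarrow> argmax_cone B' c \<subseteq> argmax_cone B c"
  by (auto simp: argmax_cone_def)

lemma minkowski_familyE:
  assumes "x \<in> minkowski_family B"
  obtains xs where "\<forall>F\<in>B. xs F \<in> simplexF F" "x = (\<Sum>F\<in>B. xs F)"
  using assms unfolding minkowski_family_def by blast

lemma minkowski_family_inner_le: "x \<in> minkowski_family B \<Longrightarrow> c \<bullet> x \<le> support_fun B c"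
  unfolding support_fun_def
  by (erule minkowski_familyE) (auto simp: inner_sum_right intro!: sum_mono simplexF_inner_le)

lemma inner_sum_eq_support_fun_iff:
  assumes "\<forall>F\<in>B. xs F \<in> simplexF F"
  shows "c \<bullet> (\<Sum>F\<in>B. xs F) = support_fun B c \<longleftrightarrow> (\<forall>F\<in>B. c \<bullet> xs F = max_on c F)"
proof -
  have le: "\<And>F. F \<in> B \<Longrightarrow> c \<bullet> xs F \<le> max_on c F"
    using assms simplexF_inner_le by blast
  show ?thesis
    unfolding support_fun_def inner_sum_right
    using sum_mono_inv[of "\<lambda>F. c \<bullet> xs F" B "max_on c", OF _ le] by (auto intro: sum.cong)
qed

lemma central_point_in_minkowski_family:
  assumes "\<forall>S\<in>B. S \<noteq> {}"
  shows "central_point B c0 \<in> minkowski_family B"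
  unfolding minkowski_family_def central_point_def
  using assms by (auto intro!: barycenter_in_simplexF argmax_on_nonempty argmax_on_subset)

lemma inner_central_point_eq_support_fun_iff:
  assumes "\<forall>S\<in>B. S \<noteq> {}"
  shows "c \<bullet> central_point B c0 = support_fun B c \<longleftrightarrow> c \<in> argmax_cone B c0"
proof -
  have "\<forall>S\<in>B. argmax_on c0 S \<noteq> {} \<and> argmax_on c0 S \<subseteq> S"
    using assms by (simp add: argmax_on_nonempty argmax_on_subset)
  then show ?thesis
    unfolding central_point_def argmax_cone_def
    by (simp add: inner_sum_eq_support_fun_iff barycenter_in_simplexF inner_barycenter_eq_max_on_iff)
qed

lemma max_face_inner_eq_support_fun:
  assumes "x \<in> max_face B c0" "c \<in> argmax_cone B c0"
  shows "c \<bullet> x = support_fun B c"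
proof -
  obtain xs where xs: "\<forall>F\<in>B. xs F \<in> simplexF F" and x: "x = (\<Sum>F\<in>B. xs F)"
    using assms(1) unfolding max_face_def by (blast elim: minkowski_familyE)
  have "\<forall>F\<in>B. c0 \<bullet> xs F = max_on c0 F"
    using assms(1) xs unfolding x max_face_def by (simp add: inner_sum_eq_support_fun_iff)
  moreover have "\<forall>F\<in>B. argmax_on c0 F \<subseteq> argmax_on c F"
    using assms(2) by (simp add: argmax_cone_def)
  ultimately have "\<forall>F\<in>B. c \<bullet> xs F = max_on c F"
    using xs by (meson order_trans simplexF_inner_eq_max_on_iff)
  then show ?thesis
    using xs unfolding x by (simp add: inner_sum_eq_support_fun_iff)
qed

lemma polytope_minkowski_family: "polytope (minkowski_family B)"
proof -
  let ?E = "\<lambda>F. (\<lambda>i. axis i (1::real)) ` F"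
  have "minkowski_family B = (\<Sum>F\<in>B. simplexF F)"
    by (simp add: minkowski_family_def set_sum_alt)
  also have "\<dots> = (\<Sum>F\<in>B. convex hull ?E F)"
    unfolding simplexF_def ..
  also have "\<dots> = convex hull (\<Sum>F\<in>B. ?E F)"
    by (simp add: convex_hull_set_sum)
  finally show ?thesis
    unfolding polytope_def by (intro exI[of _ "\<Sum>F\<in>B. ?E F"]) (simp add: finite_set_sum)
qed

lemma max_face_face_of: "max_face B c face_of minkowski_family B"
  unfolding max_face_def
  using polytope_imp_convex[OF polytope_minkowski_family]
  by (rule face_of_Int_supporting_hyperplane_le) (rule minkowski_family_inner_le)

lemma central_point_in_max_face:
  "\<forall>S\<in>B. S \<noteq> {} \<Longrightarrow> central_point B c \<in> max_face B c"
  unfolding max_face_def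
  by (simp add: central_point_in_minkowski_family inner_central_point_eq_support_fun_iff argmax_cone_self)

lemma face_of_minkowski_family_eq_max_face:
  assumes ne: "\<forall>S\<in>B. S \<noteq> {}" and G: "G face_of minkowski_family B" "G \<noteq> {}"
  obtains c where "G = max_face B c"
proof -
  have "G exposed_face_of minkowski_family B"
    using G exposed_face_of_polyhedron[OF polytope_imp_polyhedron[OF polytope_minkowski_family]] by blast
  then obtain c b where le: "minkowski_family B \<subseteq> {x. c \<bullet> x \<le> b}"
    and G_eq: "G = minkowski_family B \<inter> {x. c \<bullet> x = b}"
    unfolding exposed_face_of_def by blast
  obtain g where "g \<in> G" using G by blast
  then have "b \<le> support_fun B c"
    using G_eq minkowski_family_inner_le by fastforce
  moreover have "support_fun B c \<le> b"
    using le central_point_in_max_face[OF ne, of c] by (auto simp: max_face_def)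
  ultimately have "G = max_face B c"
    using G_eq by (simp add: max_face_def)
  then show thesis ..
qed

lemma normal_cone_max_face:
  assumes ne: "\<forall>S\<in>B. S \<noteq> {}"
  shows "normal_cone (minkowski_family B) (max_face B c0) = argmax_cone B c0"
proof (intro set_eqI iffI)
  fix c assume c: "c \<in> normal_cone (minkowski_family B) (max_face B c0)"
  have "support_fun B c = c \<bullet> central_point B c"
    using inner_central_point_eq_support_fun_iff[OF ne] argmax_cone_self by metis
  also have "\<dots> \<le> c \<bullet> central_point B c0"
    using c central_point_in_max_face[OF ne, of c0] central_point_in_minkowski_family[OF ne, of c]
    unfolding normal_cone_def by simp
  moreover have "c \<bullet> central_point B c0 \<le> support_fun B c"
    using central_point_in_minkowski_family[OF ne] by (rule minkowski_family_inner_le)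
  ultimately have "c \<bullet> central_point B c0 = support_fun B c"
    by linarith
  then show "c \<in> argmax_cone B c0"
    using inner_central_point_eq_support_fun_iff[OF ne] by simp
next
  fix c assume c: "c \<in> argmax_cone B c0"
  show "c \<in> normal_cone (minkowski_family B) (max_face B c0)"
    unfolding normal_cone_def
  proof (intro CollectI ballI)
    fix x y assume x: "x \<in> max_face B c0" and y: "y \<in> minkowski_family B"
    have "c \<bullet> x = support_fun B c"
      using x c by (rule max_face_inner_eq_support_fun)
    then show "c \<bullet> y \<le> c \<bullet> x"
      using minkowski_family_inner_le[OF y] by simp
  qed
qed

lemma normal_fan_minkowski_family:
  assumes ne: "\<forall>S\<in>B. S \<noteq> {}"
  shows "normal_fan (minkowski_family B) = range (argmax_cone B)"
proof (intro set_eqI iffI)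
  fix C assume "C \<in> normal_fan (minkowski_family B)"
  then obtain G where G: "G face_of minkowski_family B" "G \<noteq> {}"
    and C: "C = normal_cone (minkowski_family B) G"
    unfolding normal_fan_def by blast
  obtain c0 where "G = max_face B c0"
    using face_of_minkowski_family_eq_max_face[OF ne G] .
  then show "C \<in> range (argmax_cone B)"
    using C normal_cone_max_face[OF ne] by simp
next
  fix C assume "C \<in> range (argmax_cone B)"
  then obtain c0 where "C = normal_cone (minkowski_family B) (max_face B c0)"
    using normal_cone_max_face[OF ne] by auto
  moreover have "max_face B c0 face_of minkowski_family B" "max_face B c0 \<noteq> {}"
    using max_face_face_of central_point_in_max_face[OF ne] by blast+
  ultimately show "C \<in> normal_fan (minkowski_family B)"
    unfolding normal_fan_def by (intro CollectI exI conjI)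
qed

section \<open>Argmax cones form a complete fan\<close>

lemma argmax_cone_eq_INT:
  "argmax_cone B c0 = (\<Inter>S\<in>B. \<Inter>i\<in>argmax_on c0 S. \<Inter>j\<in>S. {c. c$j \<le> c$i})"
  unfolding argmax_cone_def argmax_on_def by blast

lemma Collect_component_le_eq_halfspace:
  "{c::real^'n::finite. c$j \<le> c$i} = {c. (axis j 1 - axis i 1) \<bullet> c \<le> 0}"
  by (auto simp: inner_diff_left inner_axis')

lemma convex_argmax_cone: "convex (argmax_cone B c0)"
  unfolding argmax_cone_eq_INT Collect_component_le_eq_halfspace
  by (intro convex_INT convex_halfspace_le)

lemma closed_argmax_cone: "closed (argmax_cone B c0)"
  unfolding argmax_cone_eq_INT Collect_component_le_eq_halfspace
  by (intro closed_INT ballI closed_halfspace_le)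

lemma cone_argmax_cone: "cone (argmax_cone B c0)"
  unfolding argmax_cone_eq_INT cone_def by (auto intro: mult_left_mono)

lemma argmax_cone_Int_face_of:
  assumes ne: "\<forall>S\<in>B. S \<noteq> {}"
  shows "(argmax_cone B c0 \<inter> argmax_cone B c1) face_of argmax_cone B c0"
proof -
  let ?a = "central_point B c1 - central_point B c0"
  have on_cone: "?a \<bullet> c = c \<bullet> central_point B c1 - support_fun B c" if "c \<in> argmax_cone B c0" for c
    using that inner_central_point_eq_support_fun_iff[OF ne, of c c0]
    by (simp add: inner_diff_left inner_diff_right inner_commute)
  have "argmax_cone B c0 \<inter> argmax_cone B c1 = argmax_cone B c0 \<inter> {c. ?a \<bullet> c = 0}"
    using on_cone inner_central_point_eq_support_fun_iff[OF ne] by auto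
  moreover have "?a \<bullet> c \<le> 0" if "c \<in> argmax_cone B c0" for c
    using on_cone[OF that] minkowski_family_inner_le[OF central_point_in_minkowski_family[OF ne]]
    by simp
  ultimately show ?thesis
    using face_of_Int_supporting_hyperplane_le[OF convex_argmax_cone] by metis
qed

lemma argmax_on_scaleR: "0 < t \<Longrightarrow> argmax_on (t *\<^sub>R a) S = argmax_on a S"
  unfolding argmax_on_def by auto

lemma argmax_on_add:
  assumes "argmax_on a S \<inter> argmax_on b S \<noteq> {}"
  shows "argmax_on (a + b) S = argmax_on a S \<inter> argmax_on b S"
proof (intro set_eqI iffI)
  obtain k where k: "k \<in> argmax_on a S" "k \<in> argmax_on b S"
    using assms by blast
  fix i assume i: "i \<in> argmax_on (a + b) S"
  have "i \<in> S" "a$k + b$k \<le> a$i + b$i" "a$i \<le> a$k" "b$i \<le> b$k"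
    using i k unfolding argmax_on_def by auto
  then have "a$i = a$k" "b$i = b$k"
    by linarith+
  then show "i \<in> argmax_on a S \<inter> argmax_on b S"
    using k \<open>i \<in> S\<close> unfolding argmax_on_def by simp
next
  fix i assume "i \<in> argmax_on a S \<inter> argmax_on b S"
  then show "i \<in> argmax_on (a + b) S"
    unfolding argmax_on_def by (auto intro: add_mono)
qed

definition argmax_size :: "'n::finite set set \<Rightarrow> real^'n \<Rightarrow> nat" where
  "argmax_size B c = (\<Sum>S\<in>B. card (argmax_on c S))"

text \<open>Comparing with the midpoint of \<open>c1\<close> and any \<open>c \<in> D\<close>, whose argmax sets are the
  intersections of theirs, minimality forces the argmax sets of \<open>c1\<close> into those of \<open>c\<close>.\<close>
lemma subset_argmax_cone_min_argmax_size:
  assumes ne: "\<forall>S\<in>B. S \<noteq> {}" and D: "convex D" "D \<subseteq> argmax_cone B c0"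
    and c1: "c1 \<in> D" and min: "\<And>c. c \<in> D \<Longrightarrow> argmax_size B c1 \<le> argmax_size B c"
  shows "D \<subseteq> argmax_cone B c1"
proof
  fix c assume c: "c \<in> D"
  define m where "m = (1/2) *\<^sub>R c1 + (1/2) *\<^sub>R c"
  have "m \<in> D"
    using convexD[OF D(1) c1 c, of "1/2" "1/2"] by (simp add: m_def)
  have m_argmax: "argmax_on m S = argmax_on c1 S \<inter> argmax_on c S" if S: "S \<in> B" for S
  proof -
    have "argmax_on c0 S \<subseteq> argmax_on c1 S \<inter> argmax_on c S"
      using D(2) c1 c S unfolding argmax_cone_def by blast
    moreover have "argmax_on c0 S \<noteq> {}"
      using ne S by (simp add: argmax_on_nonempty)
    ultimately have "argmax_on c1 S \<inter> argmax_on c S \<noteq> {}"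
      by blast
    then show ?thesis
      unfolding m_def scaleR_right_distrib[symmetric] by (simp add: argmax_on_scaleR argmax_on_add)
  qed
  have card_eq: "card (argmax_on m S) = card (argmax_on c1 S)" if S: "S \<in> B" for S
  proof (rule ccontr)
    have le: "\<forall>S\<in>B. card (argmax_on m S) \<le> card (argmax_on c1 S)"
      using m_argmax by (auto intro!: card_mono)
    assume "card (argmax_on m S) \<noteq> card (argmax_on c1 S)"
    then have "argmax_size B m < argmax_size B c1"
      unfolding argmax_size_def using le S by (intro sum_strict_mono_ex1) (auto intro!: bexI[of _ S])
    then show False
      using min[OF \<open>m \<in> D\<close>] by simp
  qed
  have "argmax_on c1 S \<subseteq> argmax_on c S" if S: "S \<in> B" for S
    using card_subset_eq[of "argmax_on c1 S" "argmax_on m S"] card_eq[OF S] m_argmax[OF S] by auto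
  then have "\<forall>S\<in>B. argmax_on c1 S \<subseteq> argmax_on c S" by blast
  then show "c \<in> argmax_cone B c1"
    by (simp add: argmax_cone_def)
qed

lemma argmax_on_perturb:
  assumes "argmax_on c1 S \<subseteq> argmax_on c S"
  shows "\<forall>\<^sub>F t in at_right 0. argmax_on c1 S \<subseteq> argmax_on (c1 + t *\<^sub>R (c1 - c)) S"
proof -
  define z where "z t = c1 + t *\<^sub>R (c1 - c)" for t :: real
  have "\<forall>\<^sub>F t in at_right 0. (z t)$j \<le> (z t)$i" if i: "i \<in> argmax_on c1 S" and j: "j \<in> S" for i j
  proof (cases "c1$j < c1$i")
    case True
    have "((\<lambda>t. (z t)$i - (z t)$j) \<longlongrightarrow> c1$i - c1$j) (at_right 0)"
      unfolding z_def by (auto intro!: tendsto_eq_intros)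
    then have "\<forall>\<^sub>F t in at_right 0. 0 < (z t)$i - (z t)$j"
      using True by (intro order_tendstoD(1)) auto
    then show ?thesis
      by eventually_elim simp
  next
    case False
    then have "j \<in> argmax_on c1 S"
      using i j unfolding argmax_on_def by fastforce
    then have "c$i = c$j" "c1$i = c1$j"
      using i assms unfolding argmax_on_def by (auto intro: antisym)
    then show ?thesis
      by (simp add: z_def)
  qed
  then have "\<forall>\<^sub>F t in at_right 0. \<forall>(i, j)\<in>argmax_on c1 S \<times> S. (z t)$j \<le> (z t)$i"
    by (intro eventually_ball_finite) auto
  then show ?thesis
    by eventually_elim (auto simp: z_def argmax_on_def)
qed

lemma argmax_cone_open_segment:
  assumes c: "c \<in> argmax_cone B c1" "c \<noteq> c1"
  obtains z where "z \<in> argmax_cone B c1" "c1 \<in> open_segment c z"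
proof -
  define z where "z t = c1 + t *\<^sub>R (c1 - c)" for t :: real
  have "\<forall>\<^sub>F t in at_right 0. \<forall>S\<in>B. argmax_on c1 S \<subseteq> argmax_on (z t) S"
    using c(1) unfolding z_def argmax_cone_def by (intro eventually_ball_finite) (auto intro: argmax_on_perturb)
  then have "\<forall>\<^sub>F t in at_right 0. 0 < t \<and> z t \<in> argmax_cone B c1"
    using eventually_at_right_less[of 0] by eventually_elim (simp add: argmax_cone_def)
  then obtain t where t: "0 < t" and z: "z t \<in> argmax_cone B c1"
    using eventually_happens'[OF trivial_limit_at_right_real] by blast
  define u where "u = 1 / (1 + t)"
  have u: "0 < u" "u < 1" "u * (1 + t) = 1"
    using t by (auto simp: u_def)
  have "(1 - u) *\<^sub>R c + u *\<^sub>R z t = (1 - u * (1 + t)) *\<^sub>R c + (u * (1 + t)) *\<^sub>R c1"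
    by (simp add: z_def algebra_simps)
  then have "c1 = (1 - u) *\<^sub>R c + u *\<^sub>R z t"
    using u(3) by simp
  moreover have "c \<noteq> z t"
  proof
    assume "c = z t"
    then have "(1 + t) *\<^sub>R (c - c1) = 0"
      by (simp add: z_def algebra_simps)
    then show False
      using t c(2) by simp
  qed
  ultimately have "c1 \<in> open_segment c (z t)"
    using u unfolding in_segment by blast
  with z show thesis ..
qed

lemma argmax_cone_subset_face:
  assumes D: "D face_of argmax_cone B c0" and c1: "c1 \<in> D"
  shows "argmax_cone B c1 \<subseteq> D"
proof
  fix c assume c: "c \<in> argmax_cone B c1"
  have sub: "argmax_cone B c1 \<subseteq> argmax_cone B c0"
    using argmax_cone_trans face_of_imp_subset[OF D] c1 by (meson subsetD)
  show "c \<in> D"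
  proof (cases "c = c1")
    case False
    obtain z where "z \<in> argmax_cone B c1" "c1 \<in> open_segment c z"
      using c False by (rule argmax_cone_open_segment)
    then show ?thesis
      using face_ofD[OF D] c c1 sub by blast
  qed (use c1 in simp)
qed

lemma face_of_argmax_cone:
  assumes ne: "\<forall>S\<in>B. S \<noteq> {}" and D: "D face_of argmax_cone B c0" "D \<noteq> {}"
  obtains c1 where "D = argmax_cone B c1"
proof -
  obtain c1 where c1: "c1 \<in> D" and min: "\<And>c. c \<in> D \<Longrightarrow> argmax_size B c1 \<le> argmax_size B c"
    using D(2) ex_has_least_nat[of "\<lambda>c. c \<in> D" _ "argmax_size B"] by blast
  have "D \<subseteq> argmax_cone B c1"
    using ne face_of_imp_convex[OF D(1)] face_of_imp_subset[OF D(1)] c1 min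
    by (rule subset_argmax_cone_min_argmax_size)
  moreover have "argmax_cone B c1 \<subseteq> D"
    using D(1) c1 by (rule argmax_cone_subset_face)
  ultimately show thesis
    using that by blast
qed

lemma is_fan_argmax_cones:
  assumes ne: "\<forall>S\<in>B. S \<noteq> {}"
  shows "is_fan (range (argmax_cone B))"
  unfolding is_fan_def
proof (intro conjI)
  show "\<forall>C\<in>range (argmax_cone B). convex C \<and> cone C \<and> closed C"
    using convex_argmax_cone cone_argmax_cone closed_argmax_cone by blast
  show "\<forall>C\<in>range (argmax_cone B). \<forall>D. D face_of C \<and> D \<noteq> {} \<longrightarrow> D \<in> range (argmax_cone B)"
    using face_of_argmax_cone[OF ne] by (metis rangeE rangeI)
  show "\<forall>C\<in>range (argmax_cone B). \<forall>D\<in>range (argmax_cone B). C \<inter> D face_of C \<and> C \<inter> D face_of D"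
    using argmax_cone_Int_face_of[OF ne] by (metis Int_commute rangeE)
qed

lemma fan_support_argmax_cones: "fan_support (range (argmax_cone B)) = UNIV"
  unfolding fan_support_def using argmax_cone_self by blast

lemma refines_argmax_cones: "B \<subseteq> B' \<Longrightarrow> refines (range (argmax_cone B')) (range (argmax_cone B))"
  unfolding refines_def using argmax_cone_antimono by blast

section \<open>Laminar families\<close>

locale laminar_family =
  fixes N :: "'a set set"
  assumes finite: "finite N"
    and laminar: "S \<in> N \<Longrightarrow> T \<in> N \<Longrightarrow> S \<inter> T \<noteq> {} \<Longrightarrow> S \<subseteq> T \<or> T \<subseteq> S"
    and UNIV_mem: "UNIV \<in> N"
    and empty_not_mem: "{} \<notin> N"
begin

definition parent :: "'a set \<Rightarrow> 'a set" where
  "parent T = \<Inter>{S\<in>N. T \<subset> S}"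

lemma
  assumes T: "T \<in> N" "T \<noteq> UNIV"
  shows parent_mem: "parent T \<in> N"
    and psubset_parent: "T \<subset> parent T"
    and parent_least: "\<And>S. S \<in> N \<Longrightarrow> T \<subset> S \<Longrightarrow> parent T \<subseteq> S"
proof -
  let ?A = "{S\<in>N. T \<subset> S}"
  have "finite ?A"
    using finite by simp
  moreover have "UNIV \<in> ?A"
    using UNIV_mem T by auto
  ultimately obtain m where m: "m \<in> ?A" and minimal: "\<forall>S\<in>?A. S \<subseteq> m \<longrightarrow> m = S"
    using finite_has_minimal[of ?A] by blast
  have "T \<noteq> {}"
    using T empty_not_mem by blast
  have least: "m \<subseteq> S" if S: "S \<in> ?A" for S
  proof -
    have "m \<inter> S \<noteq> {}"
      using S m \<open>T \<noteq> {}\<close> by blast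
    then have "m \<subseteq> S \<or> S \<subseteq> m"
      using S m laminar by blast
    then show ?thesis
      using minimal S by blast
  qed
  have "parent T = m"
    unfolding parent_def using m least by blast
  then show "parent T \<in> N" "T \<subset> parent T" "\<And>S. S \<in> N \<Longrightarrow> T \<subset> S \<Longrightarrow> parent T \<subseteq> S"
    using m least by simp_all
qed

lemma bij_betw_parent:
  assumes b: "b \<in> N" "x \<in> b" "\<And>T. T \<in> N \<Longrightarrow> x \<in> T \<Longrightarrow> b \<subseteq> T"
  shows "bij_betw parent ({T\<in>N. x \<in> T} - {UNIV}) ({T\<in>N. x \<in> T} - {b})"
proof -
  let ?C = "{T\<in>N. x \<in> T}"
  have chain: "T \<subseteq> T' \<or> T' \<subseteq> T" if "T \<in> ?C" "T' \<in> ?C" for T T'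
  proof -
    have "T \<inter> T' \<noteq> {}"
      using that by blast
    then show ?thesis
      using that laminar by blast
  qed
  have strict_mono: "parent T \<subset> parent T'"
    if "T \<in> ?C - {UNIV}" "T' \<in> ?C - {UNIV}" "T \<subset> T'" for T T'
  proof -
    have "parent T \<subseteq> T'"
      using that parent_least[of T T'] by blast
    moreover have "T' \<subset> parent T'"
      using that psubset_parent[of T'] by blast
    ultimately show ?thesis
      by blast
  qed
  have inj: "inj_on parent (?C - {UNIV})"
  proof (rule inj_onI)
    fix T T' assume "T \<in> ?C - {UNIV}" "T' \<in> ?C - {UNIV}" "parent T = parent T'"
    then show "T = T'"
      using chain[of T T'] strict_mono[of T T'] strict_mono[of T' T] by blast
  qed
  have into: "parent T \<in> ?C - {b}" if T: "T \<in> ?C - {UNIV}" for T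
  proof -
    have "parent T \<in> N" "T \<subset> parent T"
      using T parent_mem psubset_parent[of T] by auto
    moreover have "b \<subseteq> T"
      using T b(3) by blast
    ultimately show ?thesis
      using T by blast
  qed
  have onto: "S \<in> parent ` (?C - {UNIV})" if S: "S \<in> ?C - {b}" for S
  proof -
    let ?A = "{T\<in>?C. T \<subset> S}"
    have "finite ?A"
      using finite by simp
    moreover have "b \<in> ?A"
      using S b by blast
    ultimately obtain T where T: "T \<in> ?A" and maximal: "\<forall>T'\<in>?A. T \<subseteq> T' \<longrightarrow> T = T'"
      using finite_has_maximal[of ?A] by blast
    have "T \<noteq> UNIV"
      using T by blast
    then have "parent T \<in> N" "T \<subset> parent T" "parent T \<subseteq> S"
      using parent_mem[of T] psubset_parent[of T] parent_least[of T S] T S by auto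
    then have "parent T = S"
      using maximal T by blast
    then show ?thesis
      using T \<open>T \<noteq> UNIV\<close> by blast
  qed
  have "parent ` (?C - {UNIV}) = ?C - {b}"
    using into onto by (intro subset_antisym image_subsetI subsetI)
  with inj show ?thesis
    unfolding bij_betw_def ..
qed

lemma sum_parent_telescope:
  assumes b: "b \<in> N" "x \<in> b" "\<And>T. T \<in> N \<Longrightarrow> x \<in> T \<Longrightarrow> b \<subseteq> T"
  shows "(\<Sum>T\<in>{T\<in>N. x \<in> T} - {UNIV}. f (parent T) - f T) = f UNIV - (f b :: 'b::ab_group_add)"
proof -
  let ?C = "{T\<in>N. x \<in> T}"
  have fin: "finite ?C"
    using finite by simp
  have "(\<Sum>T\<in>?C - {UNIV}. f (parent T)) = (\<Sum>T\<in>?C - {b}. f T)"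
    using sum.reindex_bij_betw[OF bij_betw_parent[OF b]] .
  also have "\<dots> = (\<Sum>T\<in>?C. f T) - f b"
    using fin b by (simp add: sum_diff1)
  finally show ?thesis
    using fin UNIV_mem by (simp add: sum_subtractf sum_diff1)
qed

end

definition indicator_vec :: "'n::finite set \<Rightarrow> real^'n" where
  "indicator_vec T = (\<chi> i. if i \<in> T then 1 else 0)"

lemma indicator_vec_nth [simp]: "indicator_vec T $ i = (if i \<in> T then 1 else 0)"
  by (simp add: indicator_vec_def)

lemma indicator_vec_UNIV: "indicator_vec UNIV = ones"
  by (simp add: vec_eq_iff ones_def)

lemma inj_indicator_vec: "inj indicator_vec"
proof (rule injI)
  fix S T :: "'n::finite set" assume eq: "indicator_vec S = indicator_vec T"
  have "i \<in> S \<longleftrightarrow> i \<in> T" for i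
    using arg_cong[OF eq, of "\<lambda>v. v $ i"] by (simp split: if_splits)
  then show "S = T"
    by blast
qed

lemma inj_neg_indicator_vec: "inj (\<lambda>T. - indicator_vec T)"
  using inj_indicator_vec by (simp add: inj_def)

lemma neg_indicator_vec_neq_ones: "- indicator_vec T \<noteq> ones"
proof
  assume "- indicator_vec T = ones"
  then have "\<forall>i. (- indicator_vec T) $ i = ones $ i"
    by simp
  then show False
    by (simp add: ones_def split: if_splits)
qed

text \<open>Restricted to the rows of the pivot points, the indicator matrix is unitriangular with
  respect to inclusion.\<close>
lemma laminar_indicator_combination_eq_0:
  fixes N :: "'n::finite set set"
  assumes laminar: "\<And>S T. S \<in> N \<Longrightarrow> T \<in> N \<Longrightarrow> S \<inter> T \<noteq> {} \<Longrightarrow> S \<subseteq> T \<or> T \<subseteq> S"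
    and pivot: "\<And>T. T \<in> N \<Longrightarrow> \<exists>x\<in>T. \<forall>T'\<in>N. T' \<subset> T \<longrightarrow> x \<notin> T'"
    and zero: "(\<Sum>T\<in>N. a T *\<^sub>R indicator_vec T) = 0"
  shows "\<forall>T\<in>N. a T = 0"
proof (rule ccontr)
  let ?A = "{T\<in>N. a T \<noteq> 0}"
  assume "\<not> (\<forall>T\<in>N. a T = 0)"
  then have "?A \<noteq> {}"
    by blast
  then obtain T where T: "T \<in> ?A" and maximal: "\<forall>T'\<in>?A. T \<subseteq> T' \<longrightarrow> T = T'"
    using finite_has_maximal[of ?A] by auto
  obtain x where x: "x \<in> T" "\<forall>T'\<in>N. T' \<subset> T \<longrightarrow> x \<notin> T'"
    using pivot T by blast
  have others: "a T' = 0" if T': "T' \<in> N" "T' \<noteq> T" "x \<in> T'" for T'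
  proof (rule ccontr)
    assume "a T' \<noteq> 0"
    moreover have "T \<inter> T' \<noteq> {}"
      using x T' by blast
    then have "T' \<subset> T \<or> T \<subseteq> T'"
      using laminar[of T T'] T T' by blast
    ultimately show False
      using x T' T maximal by blast
  qed
  have "0 = (\<Sum>T'\<in>N. a T' * indicator_vec T' $ x)"
    using arg_cong[OF zero, of "\<lambda>v. v $ x"] by simp
  also have "\<dots> = a T * indicator_vec T $ x + (\<Sum>T'\<in>N - {T}. a T' * indicator_vec T' $ x)"
    using T by (intro sum.remove) auto
  also have "(\<Sum>T'\<in>N - {T}. a T' * indicator_vec T' $ x) = 0"
    using others by (intro sum.neutral) auto
  also have "a T * indicator_vec T $ x + 0 = a T"
    using x(1) by simp
  finally show False
    using T by simp
qed

lemma independent_laminar_indicator_vecs: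
  fixes N :: "'n::finite set set"
  assumes laminar: "\<And>S T. S \<in> N \<Longrightarrow> T \<in> N \<Longrightarrow> S \<inter> T \<noteq> {} \<Longrightarrow> S \<subseteq> T \<or> T \<subseteq> S"
    and pivot: "\<And>T. T \<in> N \<Longrightarrow> \<exists>x\<in>T. \<forall>T'\<in>N. T' \<subset> T \<longrightarrow> x \<notin> T'"
  shows "independent (indicator_vec ` N)"
proof (rule independent_if_scalars_zero)
  fix f v assume zero: "(\<Sum>v\<in>indicator_vec ` N. f v *\<^sub>R v) = 0" and v: "v \<in> indicator_vec ` N"
  have "inj_on indicator_vec N"
    using inj_indicator_vec by (rule inj_on_subset) simp
  then have "(\<Sum>T\<in>N. f (indicator_vec T) *\<^sub>R indicator_vec T) = 0"
    using zero by (simp add: sum.reindex)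
  then have "\<forall>T\<in>N. f (indicator_vec T) = 0"
    using laminar pivot by (rule laminar_indicator_combination_eq_0[rotated 2])
  then show "f v = 0"
    using v by blast
qed simp

section \<open>Building sets and simplicial cones\<close>

lemma simplicial_mod_onesI:
  assumes fin: "finite A" and inj: "inj_on f A" and ones: "ones \<notin> f ` A"
    and indep: "independent (insert ones (f ` A))"
    and C: "\<And>c. c \<in> C \<longleftrightarrow> (\<exists>b t. (\<forall>T\<in>A. 0 \<le> b T) \<and> c = (\<Sum>T\<in>A. b T *\<^sub>R f T) + t *\<^sub>R ones)"
  shows "simplicial_mod_ones C"
proof -
  have "C = {(\<Sum>v\<in>f ` A. a v *\<^sub>R v) + t *\<^sub>R ones | a t. \<forall>v\<in>f ` A. 0 \<le> a v}"
  proof (intro set_eqI iffI)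
    fix c assume "c \<in> C"
    then obtain b t where b: "\<forall>T\<in>A. 0 \<le> b T" and c: "c = (\<Sum>T\<in>A. b T *\<^sub>R f T) + t *\<^sub>R ones"
      using C by blast
    let ?a = "b \<circ> inv_into A f"
    have "c = (\<Sum>v\<in>f ` A. ?a v *\<^sub>R v) + t *\<^sub>R ones"
      using inj c by (simp add: sum.reindex)
    moreover have "\<forall>v\<in>f ` A. 0 \<le> ?a v"
      using inj b by simp
    ultimately show "c \<in> {(\<Sum>v\<in>f ` A. a v *\<^sub>R v) + t *\<^sub>R ones | a t. \<forall>v\<in>f ` A. 0 \<le> a v}"
      by (intro CollectI exI conjI)
  next
    fix c assume "c \<in> {(\<Sum>v\<in>f ` A. a v *\<^sub>R v) + t *\<^sub>R ones | a t. \<forall>v\<in>f ` A. 0 \<le> a v}"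
    then obtain a t where a: "\<forall>v\<in>f ` A. 0 \<le> a v" and c: "c = (\<Sum>v\<in>f ` A. a v *\<^sub>R v) + t *\<^sub>R ones"
      by blast
    have "c = (\<Sum>T\<in>A. (a \<circ> f) T *\<^sub>R f T) + t *\<^sub>R ones"
      using inj c by (simp add: sum.reindex)
    moreover have "\<forall>T\<in>A. 0 \<le> (a \<circ> f) T"
      using a by simp
    ultimately show "c \<in> C"
      using C by blast
  qed
  then show ?thesis
    unfolding simplicial_mod_ones_def using fin ones indep by blast
qed

definition sublevel :: "real^'n::finite \<Rightarrow> real \<Rightarrow> 'n set" where
  "sublevel c0 v = {i. c0$i \<le> v}"

lemma sublevel_mono: "v \<le> w \<Longrightarrow> sublevel c0 v \<subseteq> sublevel c0 w"
  unfolding sublevel_def by auto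

locale building_set =
  fixes B :: "'n::finite set set"
  assumes nonempty: "\<forall>S\<in>B. S \<noteq> {}"
    and UNIV_mem: "UNIV \<in> B"
    and singleton_mem: "{i} \<in> B"
    and union_mem: "S \<in> B \<Longrightarrow> T \<in> B \<Longrightarrow> S \<inter> T \<noteq> {} \<Longrightarrow> S \<union> T \<in> B"
begin

lemma Union_mem:
  assumes "finite X" "X \<noteq> {}" "X \<subseteq> B" "\<forall>S\<in>X. x \<in> S"
  shows "\<Union>X \<in> B"
  using assms
proof (induction X rule: finite_ne_induct)
  case (insert S X)
  then show ?case
    using union_mem[of S "\<Union>X"] by auto
qed simp

text \<open>\<open>component c0 x\<close> is the \<open>B\<close>-connected component containing \<open>x\<close> of the sublevel set
  of \<open>c0\<close> at height \<open>c0$x\<close>; these components make up the nested set of \<open>c0\<close>.\<close>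
definition component :: "real^'n \<Rightarrow> 'n \<Rightarrow> 'n set" where
  "component c0 x = \<Union>{S\<in>B. x \<in> S \<and> S \<subseteq> sublevel c0 (c0$x)}"

definition nested :: "real^'n \<Rightarrow> 'n set set" where
  "nested c0 = range (component c0)"

lemma component_mem: "component c0 x \<in> B"
  and mem_component: "x \<in> component c0 x"
  and component_subset_sublevel: "component c0 x \<subseteq> sublevel c0 (c0$x)"
proof -
  let ?X = "{S\<in>B. x \<in> S \<and> S \<subseteq> sublevel c0 (c0$x)}"
  have "{x} \<in> ?X"
    using singleton_mem by (simp add: sublevel_def)
  then show "component c0 x \<in> B" "x \<in> component c0 x"
    unfolding component_def by (auto intro!: Union_mem[of ?X x])
  show "component c0 x \<subseteq> sublevel c0 (c0$x)"
    unfolding component_def by blast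
qed

lemma component_absorb:
  assumes "S \<in> B" "S \<inter> component c0 y \<noteq> {}" "S \<subseteq> sublevel c0 (c0$y)"
  shows "S \<subseteq> component c0 y"
proof -
  have "S \<union> component c0 y \<in> B"
    using assms component_mem union_mem by blast
  moreover have "y \<in> S \<union> component c0 y" "S \<union> component c0 y \<subseteq> sublevel c0 (c0$y)"
    using assms mem_component component_subset_sublevel by auto
  ultimately show ?thesis
    unfolding component_def[of c0 y] by blast
qed

lemma component_subset_of_le:
  assumes "component c0 x \<inter> component c0 y \<noteq> {}" "c0$x \<le> c0$y"
  shows "component c0 x \<subseteq> component c0 y"
proof (rule component_absorb)
  show "component c0 x \<subseteq> sublevel c0 (c0$y)"
    using component_subset_sublevel sublevel_mono[OF assms(2)] by blast
qed (use assms component_mem mem_component component_subset_sublevel in auto)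

lemma component_subset:
  assumes "x \<in> component c0 y"
  shows "component c0 x \<subseteq> component c0 y"
proof (rule component_subset_of_le)
  show "component c0 x \<inter> component c0 y \<noteq> {}"
    using assms mem_component[of x c0] by blast
  show "c0$x \<le> c0$y"
    using assms component_subset_sublevel by (auto simp: sublevel_def)
qed

lemma laminar_family_nested: "laminar_family (nested c0)"
proof
  show "finite (nested c0)"
    by simp
  show "S \<subseteq> T \<or> T \<subseteq> S" if ST: "S \<in> nested c0" "T \<in> nested c0" "S \<inter> T \<noteq> {}" for S T
  proof -
    obtain x y where S: "S = component c0 x" and T: "T = component c0 y"
      using ST(1,2) by (auto simp: nested_def)
    show ?thesis
      using component_subset_of_le[of c0 x y] component_subset_of_le[of c0 y x] ST(3)
      unfolding S T by (metis Int_commute linear)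
  qed
  obtain x where "x \<in> argmax_on c0 UNIV"
    using argmax_on_nonempty[of UNIV c0] by blast
  then have "sublevel c0 (c0$x) = UNIV"
    by (auto simp: argmax_on_def sublevel_def)
  then have "component c0 x = UNIV"
    using component_absorb[of UNIV c0 x] UNIV_mem mem_component[of x c0] by blast
  then show "UNIV \<in> nested c0"
    unfolding nested_def by (metis rangeI)
  show "{} \<notin> nested c0"
    using mem_component by (auto simp: nested_def)
qed

lemma component_least: "T \<in> nested c0 \<Longrightarrow> x \<in> T \<Longrightarrow> component c0 x \<subseteq> T"
  unfolding nested_def using component_subset by blast

lemma nested_pivot:
  assumes "T \<in> nested c0"
  shows "\<exists>x\<in>T. \<forall>T'\<in>nested c0. T' \<subset> T \<longrightarrow> x \<notin> T'"
proof -
  obtain y where T: "T = component c0 y"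
    using assms by (auto simp: nested_def)
  then have "\<forall>T'\<in>nested c0. T' \<subset> T \<longrightarrow> y \<notin> T'"
    using component_least by blast
  then show ?thesis
    using T mem_component by blast
qed

lemma nested_absorb:
  assumes T: "T \<in> nested c0" and S: "S \<in> B" "i \<in> argmax_on c0 S" "i \<in> T"
  shows "S \<subseteq> T"
proof -
  obtain y where T_eq: "T = component c0 y"
    using T by (auto simp: nested_def)
  have "c0$i \<le> c0$y"
    using S(3) component_subset_sublevel unfolding T_eq by (auto simp: sublevel_def)
  then have "S \<subseteq> sublevel c0 (c0$y)"
    using S(2) by (auto simp: argmax_on_def sublevel_def)
  moreover have "S \<inter> T \<noteq> {}"
    using S(2,3) argmax_on_subset by blast
  ultimately show ?thesis
    unfolding T_eq using S(1) component_absorb by blast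
qed

lemma argmax_cone_ray_combination:
  assumes "\<forall>T\<in>nested c0 - {UNIV}. 0 \<le> a T"
  shows "(\<Sum>T\<in>nested c0 - {UNIV}. a T *\<^sub>R (- indicator_vec T)) + t *\<^sub>R ones \<in> argmax_cone B c0"
  unfolding argmax_cone_eq_INT
proof (intro INT_I CollectI)
  fix S i j assume S: "S \<in> B" "i \<in> argmax_on c0 S" "j \<in> S"
  have "- (a T * indicator_vec T $ j) \<le> - (a T * indicator_vec T $ i)" if "T \<in> nested c0 - {UNIV}" for T
    using nested_absorb[of T c0 S i] that S assms by auto
  then have "(\<Sum>T\<in>nested c0 - {UNIV}. - (a T * indicator_vec T $ j))
      \<le> (\<Sum>T\<in>nested c0 - {UNIV}. - (a T * indicator_vec T $ i))"
    by (rule sum_mono)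
  then show "((\<Sum>T\<in>nested c0 - {UNIV}. a T *\<^sub>R (- indicator_vec T)) + t *\<^sub>R ones) $ j
      \<le> ((\<Sum>T\<in>nested c0 - {UNIV}. a T *\<^sub>R (- indicator_vec T)) + t *\<^sub>R ones) $ i"
    by (simp add: ones_def)
qed

lemma argmax_cone_decomposition:
  assumes c: "c \<in> argmax_cone B c0"
  shows "c = (\<Sum>T\<in>nested c0 - {UNIV}.
                (max_on c (laminar_family.parent (nested c0) T) - max_on c T) *\<^sub>R (- indicator_vec T))
             + max_on c UNIV *\<^sub>R ones"
proof -
  interpret N: laminar_family "nested c0"
    by (rule laminar_family_nested)
  let ?a = "\<lambda>T. max_on c (N.parent T) - max_on c T"
  have "c$x = ((\<Sum>T\<in>nested c0 - {UNIV}. ?a T *\<^sub>R (- indicator_vec T)) + max_on c UNIV *\<^sub>R ones) $ x"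
    for x
  proof -
    have "component c0 x \<in> nested c0"
      by (simp add: nested_def)
    have "x \<in> argmax_on c0 (component c0 x)"
      using mem_component[of x c0] component_subset_sublevel[of c0 x]
      by (auto simp: argmax_on_def sublevel_def)
    then have "x \<in> argmax_on c (component c0 x)"
      using c component_mem by (auto simp: argmax_cone_def)
    then have "c$x = max_on c (component c0 x)"
      using argmax_on_eq mem_component by blast
    also have "\<dots> = max_on c UNIV - (\<Sum>T\<in>{T\<in>nested c0. x \<in> T} - {UNIV}. ?a T)"
      using N.sum_parent_telescope[of "component c0 x" x "max_on c"] mem_component component_least
        \<open>component c0 x \<in> nested c0\<close> by simp
    also have "(\<Sum>T\<in>{T\<in>nested c0. x \<in> T} - {UNIV}. ?a T)
        = (\<Sum>T\<in>nested c0 - {UNIV}. if x \<in> T then ?a T else 0)"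
      by (subst sum.inter_filter[symmetric]) (auto intro: sum.cong)
    finally show ?thesis
      by (simp add: ones_def sum_negf[symmetric] if_distrib cong: if_cong)
  qed
  then show ?thesis
    by (simp add: vec_eq_iff)
qed

lemma independent_nested_rays:
  "independent (insert ones ((\<lambda>T. - indicator_vec T) ` (nested c0 - {UNIV})))"
proof -
  interpret N: laminar_family "nested c0"
    by (rule laminar_family_nested)
  let ?Y = "indicator_vec ` (nested c0 - {UNIV})"
  have "independent (indicator_vec ` nested c0)"
    using N.laminar nested_pivot by (rule independent_laminar_indicator_vecs)
  moreover have "indicator_vec ` nested c0 = insert ones ?Y"
    using N.UNIV_mem by (simp add: indicator_vec_UNIV[symmetric] insert_absorb flip: image_insert)
  moreover have "ones \<notin> ?Y"
  proof
    assume "ones \<in> ?Y"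
    then obtain T where "T \<in> nested c0 - {UNIV}" "indicator_vec UNIV = indicator_vec T"
      by (auto simp: indicator_vec_UNIV)
    then show False
      using inj_indicator_vec by (auto dest: injD)
  qed
  ultimately have Y: "independent ?Y" "ones \<notin> span ?Y"
    by (simp_all add: independent_insert)
  have "independent (uminus ` ?Y)"
    using linear_uminus Y(1) by (rule linear_independent_injective_image) (simp add: inj_on_def)
  moreover have "span (uminus ` ?Y) \<subseteq> span ?Y"
    by (intro span_minimal subspace_span) (auto intro: span_neg span_base)
  then have "ones \<notin> span (uminus ` ?Y)"
    using Y(2) by blast
  ultimately have "independent (insert ones (uminus ` ?Y))"
    by (intro independent_insertI)
  then show ?thesis
    by (simp add: image_image)
qed

lemma mem_argmax_cone_iff_rays:
  "c \<in> argmax_cone B c0 \<longleftrightarrow> (\<exists>b t. (\<forall>T\<in>nested c0 - {UNIV}. 0 \<le> b T) \<and>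
      c = (\<Sum>T\<in>nested c0 - {UNIV}. b T *\<^sub>R (- indicator_vec T)) + t *\<^sub>R ones)"
proof
  interpret N: laminar_family "nested c0"
    by (rule laminar_family_nested)
  assume c: "c \<in> argmax_cone B c0"
  have "max_on c T \<le> max_on c (N.parent T)" if T: "T \<in> nested c0 - {UNIV}" for T
  proof (rule max_on_mono)
    show "T \<noteq> {}"
      using T N.empty_not_mem by blast
    show "T \<subseteq> N.parent T"
      using T N.psubset_parent[of T] by blast
  qed
  then have "\<forall>T\<in>nested c0 - {UNIV}. 0 \<le> max_on c (N.parent T) - max_on c T"
    by simp
  with argmax_cone_decomposition[OF c]
  show "\<exists>b t. (\<forall>T\<in>nested c0 - {UNIV}. 0 \<le> b T) \<and>
      c = (\<Sum>T\<in>nested c0 - {UNIV}. b T *\<^sub>R (- indicator_vec T)) + t *\<^sub>R ones"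
    by (intro exI conjI)
next
  assume "\<exists>b t. (\<forall>T\<in>nested c0 - {UNIV}. 0 \<le> b T) \<and>
      c = (\<Sum>T\<in>nested c0 - {UNIV}. b T *\<^sub>R (- indicator_vec T)) + t *\<^sub>R ones"
  then obtain b t where b: "\<forall>T\<in>nested c0 - {UNIV}. 0 \<le> b T"
    and c: "c = (\<Sum>T\<in>nested c0 - {UNIV}. b T *\<^sub>R (- indicator_vec T)) + t *\<^sub>R ones"
    by blast
  show "c \<in> argmax_cone B c0"
    unfolding c using b by (rule argmax_cone_ray_combination)
qed

lemma simplicial_argmax_cone: "simplicial_mod_ones (argmax_cone B c0)"
proof (rule simplicial_mod_onesI[where A = "nested c0 - {UNIV}" and f = "\<lambda>T. - indicator_vec T"])
  show "inj_on (\<lambda>T. - indicator_vec T) (nested c0 - {UNIV})"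
    using inj_neg_indicator_vec by (rule inj_on_subset) simp
  show "ones \<notin> (\<lambda>T. - indicator_vec T) ` (nested c0 - {UNIV})"
    using neg_indicator_vec_neq_ones by (auto simp: image_iff eq_commute[of ones])
qed (simp_all add: independent_nested_rays mem_argmax_cone_iff_rays)

lemma simplicial_fan_argmax_cones: "simplicial_fan (range (argmax_cone B))"
  unfolding simplicial_fan_def using is_fan_argmax_cones[OF nonempty] simplicial_argmax_cone by blast

end

lemma building_closure_nonempty:
  assumes "\<forall>F\<in>\<F>. F \<noteq> {}"
  shows "\<forall>S\<in>building_closure \<F>. S \<noteq> {}"
proof
  fix S assume "S \<in> building_closure \<F>"
  then show "S \<noteq> {}"
    by induction (use assms in auto)
qed

lemma building_set_building_closure:
  assumes "\<forall>F\<in>\<F>. F \<noteq> {}" "UNIV \<in> building_closure \<F>"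
  shows "building_set (building_closure \<F>)"
  using building_closure_nonempty[OF assms(1)] assms(2)
  by unfold_locales (auto intro: building_closure.singleton building_closure.union)

theorem corollary3p15:
  fixes \<F> :: "'n::finite set set"
  assumes "\<forall>F\<in>\<F>. F \<noteq> {}"
    and "(UNIV :: 'n set) \<in> building_closure \<F>"
  shows "simplicial_fan (normal_fan (minkowski_family (building_closure \<F>))) \<and>
         refines (normal_fan (minkowski_family (building_closure \<F>)))
                 (normal_fan (minkowski_family \<F>)) \<and>
         fan_support (normal_fan (minkowski_family (building_closure \<F>))) = UNIV \<and>
         fan_support (normal_fan (minkowski_family \<F>)) = UNIV"
proof -
  interpret building_set "building_closure \<F>"
    using assms by (rule building_set_building_closure)
  have "\<F> \<subseteq> building_closure \<F>"
    by (auto intro: building_closure.base)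
  then show ?thesis
    unfolding normal_fan_minkowski_family[OF nonempty] normal_fan_minkowski_family[OF assms(1)]
    using simplicial_fan_argmax_cones refines_argmax_cones fan_support_argmax_cones by blast
qed

end
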